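(* Let $T\ge1$ and $0<\eta\le\frac{1}{5\sqrt T}$, suppose $d:=\max\{25\eta^2T^2,1\}$ is a positive integer, let $f(w)=\max\{0,\max_{i\in[d]}(\frac{1}{\sqrt d}-w[i]-\frac{\eta i}{4d})\}$, let $\delta=\frac{\eta}{16d}$, and let $\tilde f(w)=\mathbb E_{v}[f(w+\delta v)]$ with $v$ uniform on the closed unit ball of $\mathbb R^d$. Let $(w_t)$ and $(\tilde w_t)$ be the iterates of unprojected GD with step size $\eta$ started at $w_1=\tilde w_1=0$ on $f$ and on $\tilde f$ respectively. Then $w_t=\tilde w_t$ for all $t\in[T]$.
   Context: $w[i]$ denotes the $i$-th coordinate of $w$. *)

theory Defs
  imports "HOL-Analysis.Analysis"
begin

definition subgrad :: "('a::real_inner \<Rightarrow> real) \<Rightarrow> 'a \<Rightarrow> 'a set" where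
  "subgrad F w = {g. \<forall>y. F w + inner g (y - w) \<le> F y}"

text \<open>The hard function f(w) = max{0, max_{i in [d]} (1/sqrt d - w[i] - eta i/(4d))};
  the coordinates of R^d are labelled 1..d via the bijection e.\<close>
definition hardf :: "real \<Rightarrow> nat \<Rightarrow> (nat \<Rightarrow> 'n::finite) \<Rightarrow> real^'n \<Rightarrow> real" where
  "hardf \<eta> d e w = max 0 (Max ((\<lambda>i. 1 / sqrt (real d) - w $ (e i) - \<eta> * real i / (4 * real d)) ` {1..d}))"

definition smoothed :: "real \<Rightarrow> (real^'n::finite \<Rightarrow> real) \<Rightarrow> real^'n \<Rightarrow> real" where
  "smoothed \<delta> F w = integral\<^sup>L (uniform_measure lborel (cball 0 1)) (\<lambda>v. F (w + \<delta> *\<^sub>R v))"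

end

theory Submission imports Defs "HOL-Probability.Probability_Measure" begin

text \<open>Started at 0, gradient descent on f moves the coordinates round robin: after s steps coordinate
  i equals \<eta> times the number of steps among the first s that hit it, and the piece with index
  s mod d + 1 is the maximiser, ahead of all others by \<eta>/(4d) and, as long as s < T, at least
  \<eta>/(8d) > 0 (this is where \<eta> \<le> 1/(5\<surd>T) and d \<ge> 25 \<eta>^2 T^2 enter). So f is affine on the ball of
  radius \<eta>/(8d) around the iterate and its subgradient there is unique. Smoothing with
  \<delta> = \<eta>/(16d) keeps the function affine with the same slope on a smaller ball, so both runs take
  the same step every time.\<close>

lemma subgrad_subset_if_locally_affine:
  fixes F :: "'a::real_inner \<Rightarrow> real"
  assumes r: "0 < r" and affine: "\<And>y. dist y x < r \<Longrightarrow> F y = c + inner a y"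
  shows "subgrad F x \<subseteq> {a}"
proof
  fix g assume g: "g \<in> subgrad F x"
  show "g \<in> {a}"
  proof (rule ccontr)
    assume "g \<notin> {a}"
    define u where "u = g - a"
    have u: "0 < norm u" using \<open>g \<notin> {a}\<close> unfolding u_def by simp
    define s where "s = r / (2 * norm u)"
    have s: "0 < s" using r u unfolding s_def by simp
    have "dist (x + s *\<^sub>R u) x = r / 2" using u r unfolding s_def by (simp add: dist_norm)
    then have "F (x + s *\<^sub>R u) = F x + s * inner a u"
      using affine[of x] affine[of "x + s *\<^sub>R u"] r by (simp add: inner_add_right)
    moreover have "F x + inner g ((x + s *\<^sub>R u) - x) \<le> F (x + s *\<^sub>R u)"
      using g unfolding subgrad_def by blast
    ultimately have "s * inner u u \<le> 0"
      unfolding u_def by (simp add: inner_diff_left algebra_simps)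
    moreover have "0 < s * inner u u" using s u by simp
    ultimately show False by linarith
  qed
qed
lemma prob_space_uniform_cball:
  fixes c :: "'a::euclidean_space"
  assumes "0 < r"
  shows "prob_space (uniform_measure lborel (cball c r))"
proof (rule prob_space_uniform_measure)
  show "emeasure lborel (cball c r) \<noteq> \<infinity>"
    using emeasure_lborel_cball_finite[of c r] by simp
  have "emeasure lborel (cball c r) = ennreal (measure lborel (cball c r))"
    using emeasure_lborel_cball_finite[of c r] by (intro emeasure_eq_ennreal_measure) auto
  then show "emeasure lborel (cball c r) \<noteq> 0"
    using content_cball_pos[OF assms, of c] by simp
qed

lemma smoothed_locally_affine:
  fixes F :: "real^'n::finite \<Rightarrow> real"
  assumes F: "F \<in> borel_measurable borel" and "0 \<le> \<delta>"
    and affine: "\<And>z. dist z x < r \<Longrightarrow> F z = c + inner a z"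
  obtains c' where "\<And>y. dist y x < r - \<delta> \<Longrightarrow> smoothed \<delta> F y = c' + inner a y"
proof
  let ?U = "uniform_measure lborel (cball (0::real^'n) 1)"
  interpret U: prob_space ?U by (rule prob_space_uniform_cball) simp
  have ball: "AE v in ?U. v \<in> cball 0 1"
    by (rule AE_uniform_measureI) auto
  have integrable: "integrable ?U (\<lambda>v. inner a v)"
  proof (rule U.integrable_const_bound[where B = "norm a"])
    show "AE v in ?U. norm (inner a v) \<le> norm a"
      using ball by eventually_elim
        (metis Cauchy_Schwarz_ineq2 mem_cball_0 mult_left_le norm_ge_zero order.trans real_norm_def)
  qed simp
  fix y assume y: "dist y x < r - \<delta>"
  have "AE v in ?U. F (y + \<delta> *\<^sub>R v) = c + inner a y + \<delta> * inner a v"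
    using ball
  proof eventually_elim
    case (elim v)
    have "dist (y + \<delta> *\<^sub>R v) x \<le> dist y x + \<delta> * norm v"
      using norm_triangle_ineq[of "y - x" "\<delta> *\<^sub>R v"] \<open>0 \<le> \<delta>\<close>
      by (simp add: dist_norm algebra_simps)
    also have "\<dots> < r" using y elim \<open>0 \<le> \<delta>\<close> mult_left_le[of "norm v" \<delta>] by simp
    finally show ?case using affine by (simp add: inner_add_right)
  qed
  then have "smoothed \<delta> F y = integral\<^sup>L ?U (\<lambda>v. c + inner a y + \<delta> * inner a v)"
    unfolding smoothed_def using F by (intro integral_cong_AE) auto
  also have "\<dots> = (c + \<delta> * integral\<^sup>L ?U (\<lambda>v. inner a v)) + inner a y"
    using integrable U.prob_space by simp
  finally show "smoothed \<delta> F y = (c + \<delta> * integral\<^sup>L ?U (\<lambda>v. inner a v)) + inner a y" .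
qed

lemma hardf_borel_measurable: "hardf \<eta> d e \<in> borel_measurable borel"
  unfolding hardf_def by measurable

definition hard_piece :: "real \<Rightarrow> nat \<Rightarrow> (nat \<Rightarrow> 'n::finite) \<Rightarrow> real^'n \<Rightarrow> nat \<Rightarrow> real" where
  "hard_piece \<eta> d e w i = 1 / sqrt (real d) - w $ (e i) - \<eta> * real i / (4 * real d)"

text \<open>A piece that is positive and leads all others by a margin stays the maximum under
  perturbations smaller than half that margin.\<close>
lemma hardf_locally_affine:
  assumes k: "k \<in> {1..d}"
    and margin: "\<And>i. i \<in> {1..d} \<Longrightarrow> i \<noteq> k \<Longrightarrow> hard_piece \<eta> d e x i + 2 * r \<le> hard_piece \<eta> d e x k"
    and positive: "r \<le> hard_piece \<eta> d e x k" and near: "dist y x < r"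
  shows "hardf \<eta> d e y = (1 / sqrt (real d) - \<eta> * real k / (4 * real d)) + inner (- axis (e k) 1) y"
proof -
  have coordinate: "\<bar>y $ j - x $ j\<bar> < r" for j
    using component_le_norm_cart[of "y - x" j] near by (simp add: dist_norm)
  have leader: "hard_piece \<eta> d e y i \<le> hard_piece \<eta> d e y k" if "i \<in> {1..d}" for i
    using margin[OF that] coordinate[of "e i"] coordinate[of "e k"]
    unfolding hard_piece_def by (cases "i = k") force+
  have "0 < hard_piece \<eta> d e y k"
    using positive coordinate[of "e k"] unfolding hard_piece_def by linarith
  moreover have "Max (hard_piece \<eta> d e y ` {1..d}) = hard_piece \<eta> d e y k"
    using leader k by (intro Max_eqI) auto
  ultimately have "hardf \<eta> d e y = hard_piece \<eta> d e y k"
    unfolding hardf_def hard_piece_def[abs_def] by simp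
  then show ?thesis
    unfolding hard_piece_def by (simp add: inner_axis')
qed

text \<open>Gradient descent on the hard function visits the coordinates in the order 1, 2, ..., d, 1, 2, ...;
  after s steps coordinate i has been moved round_robin_count d s i times.\<close>
definition round_robin_count :: "nat \<Rightarrow> nat \<Rightarrow> nat \<Rightarrow> nat" where
  "round_robin_count d s i = s div d + (if i \<le> s mod d then 1 else 0)"

definition is_round_robin_point :: "real \<Rightarrow> nat \<Rightarrow> (nat \<Rightarrow> 'n::finite) \<Rightarrow> nat \<Rightarrow> real^'n \<Rightarrow> bool" where
  "is_round_robin_point \<eta> d e s x \<longleftrightarrow> (\<forall>i\<in>{1..d}. x $ e i = \<eta> * real (round_robin_count d s i))"

lemma round_robin_count_Suc:
  assumes "1 \<le> d" "i \<in> {1..d}"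
  shows "round_robin_count d (Suc s) i = round_robin_count d s i + (if i = s mod d + 1 then 1 else 0)"
  using assms mod_less_divisor[of d s]
  unfolding round_robin_count_def by (cases "Suc (s mod d) = d") (auto simp: mod_Suc div_Suc)

lemma is_round_robin_point_0: "is_round_robin_point \<eta> d e 0 0"
  unfolding is_round_robin_point_def round_robin_count_def by simp

lemma is_round_robin_point_Suc:
  assumes "1 \<le> d" "inj_on e {1..d}" "is_round_robin_point \<eta> d e s x"
  shows "is_round_robin_point \<eta> d e (Suc s) (x - \<eta> *\<^sub>R (- axis (e (s mod d + 1)) 1))"
  unfolding is_round_robin_point_def
proof
  fix i assume i: "i \<in> {1..d}"
  have "s mod d + 1 \<in> {1..d}" using assms(1) by (simp add: Suc_le_eq)
  then have "e i = e (s mod d + 1) \<longleftrightarrow> i = s mod d + 1"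
    using assms(2) i by (auto dest: inj_onD)
  then show "(x - \<eta> *\<^sub>R (- axis (e (s mod d + 1)) 1)) $ e i = \<eta> * real (round_robin_count d (Suc s) i)"
    using assms(3) i round_robin_count_Suc[OF assms(1) i, of s]
    unfolding is_round_robin_point_def by (auto simp: axis_def algebra_simps)
qed

lemma is_round_robin_point_unique:
  assumes "e ` {1..d} = UNIV" "is_round_robin_point \<eta> d e s x" "is_round_robin_point \<eta> d e s y"
  shows "x = y"
  unfolding vec_eq_iff
proof
  fix j
  obtain i where "i \<in> {1..d}" "j = e i" using assms(1) by blast
  then show "x $ j = y $ j" using assms(2,3) unfolding is_round_robin_point_def by simp
qed

text \<open>The coordinates before the active one s mod d + 1 have been moved once more, which outweighs
  the tie-breaking term \<eta> i / (4d); the coordinates after it lose by that term.\<close>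
lemma round_robin_margin:
  assumes "1 \<le> d" "0 < \<eta>" "is_round_robin_point \<eta> d e s x"
    and i: "i \<in> {1..d}" "i \<noteq> s mod d + 1"
  shows "hard_piece \<eta> d e x i + \<eta> / (4 * real d) \<le> hard_piece \<eta> d e x (s mod d + 1)"
proof -
  define k where "k = s mod d + 1"
  define q where "q = \<eta> / (4 * real d)"
  have k: "k \<in> {1..d}" unfolding k_def using assms(1) by (simp add: Suc_le_eq)
  have q: "0 < q" "q * real d = \<eta> / 4" unfolding q_def using assms(1,2) by auto
  have piece: "hard_piece \<eta> d e x j = 1 / sqrt (real d) - x $ e j - q * real j" for j
    unfolding hard_piece_def q_def by simp
  have xk: "x $ e k = \<eta> * real (s div d)"
    using assms(3) k unfolding is_round_robin_point_def round_robin_count_def k_def by simp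
  show ?thesis
  proof (cases "i \<le> s mod d")
    case True
    then have "x $ e i = \<eta> * real (s div d) + \<eta>"
      using assms(3) i unfolding is_round_robin_point_def round_robin_count_def by (simp add: algebra_simps)
    moreover have "q * (real k - real i + 1) \<le> q * real d"
      using q k i True k_def by (intro mult_left_mono) auto
    ultimately show ?thesis
      using xk q assms(2) piece[of i] piece[of k] unfolding k_def q_def[symmetric] by (simp add: algebra_simps)
  next
    case False
    then have "x $ e i = \<eta> * real (s div d)"
      using assms(3) i unfolding is_round_robin_point_def round_robin_count_def by simp
    moreover have "q * (real k + 1) \<le> q * real i"
      using q False i k_def by (intro mult_left_mono) auto
    ultimately show ?thesis
      using xk piece[of i] piece[of k] unfolding k_def q_def[symmetric] by (simp add: algebra_simps)
  qed
qed

lemma step_size_bounds: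
  assumes T: "1 \<le> T" and "0 < \<eta>" and \<eta>: "\<eta> \<le> 1 / (5 * sqrt (real T))"
    and d: "real d = max (25 * \<eta>^2 * (real T)^2) 1"
  shows "real d \<le> real T" and "\<eta> * sqrt (real d) \<le> 1 / 5" and "5 * \<eta> * real T \<le> sqrt (real d)"
proof -
  have "\<eta>^2 \<le> (1 / (5 * sqrt (real T)))^2"
    using \<eta> \<open>0 < \<eta>\<close> by (intro power_mono) auto
  also have "\<dots> = 1 / (25 * real T)"
    by (simp add: power_divide power_mult_distrib)
  finally have "25 * \<eta>^2 * (real T)^2 \<le> 25 * (1 / (25 * real T)) * (real T)^2"
    by (intro mult_right_mono) auto
  also have "\<dots> = real T"
    using T by (simp add: power2_eq_square)
  finally show dT: "real d \<le> real T"
    using d T by simp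
  have "\<eta> * sqrt (real d) \<le> \<eta> * sqrt (real T)"
    using dT \<open>0 < \<eta>\<close> by simp
  also have "\<dots> \<le> 1 / 5"
    using \<eta> T by (simp add: field_simps)
  finally show "\<eta> * sqrt (real d) \<le> 1 / 5" .
  have "sqrt ((5 * \<eta> * real T)^2) \<le> sqrt (real d)"
    using d by (intro real_sqrt_le_mono) (simp add: power_mult_distrib)
  then show "5 * \<eta> * real T \<le> sqrt (real d)"
    using \<open>0 < \<eta>\<close> by simp
qed

text \<open>With r = \<surd>d, the two negative terms of the active piece are at most 1/(5r) and 1/(20r),
  while the bound itself is at most 1/(40r).\<close>
lemma round_robin_active_piece_lower_bound:
  assumes T: "1 \<le> T" and \<eta>: "0 < \<eta>" "\<eta> \<le> 1 / (5 * sqrt (real T))"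
    and d: "real d = max (25 * \<eta>^2 * (real T)^2) 1"
    and "s \<le> T" and x: "is_round_robin_point \<eta> d e s x"
  shows "\<eta> / (8 * real d) \<le> hard_piece \<eta> d e x (s mod d + 1)"
proof -
  define r where "r = sqrt (real d)"
  define k where "k = s mod d + 1"
  have d1: "1 \<le> real d" and r: "1 \<le> r" "r * r = real d"
    using d unfolding r_def by auto
  then have k: "k \<in> {1..d}" unfolding k_def by (simp add: Suc_le_eq)
  note bounds = step_size_bounds[OF T \<eta> d, folded r_def]
  have "real (s div d) * real d \<le> real T"
    using \<open>s \<le> T\<close> div_times_less_eq_dividend[of s d] by (metis of_nat_le_iff of_nat_mult le_trans)
  then have "\<eta> * real (s div d) \<le> \<eta> * (real T / (r * r))"
    using \<eta> r d1 by (intro mult_left_mono) (auto simp: field_simps)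
  also have "\<dots> = (\<eta> * real T) / (r * r)"
    by simp
  also have "\<dots> \<le> (r / 5) / (r * r)"
    using bounds(3) r by (intro divide_right_mono) auto
  also have "\<dots> = 1 / (5 * r)"
    using r(1) by (simp add: field_simps)
  finally have visits: "\<eta> * real (s div d) \<le> 1 / (5 * r)" .
  have "\<eta> * real k / (4 * real d) \<le> \<eta> / 4"
    using k \<eta> d1 by (simp add: field_simps)
  also have "\<dots> \<le> 1 / (20 * r)"
    using bounds(2) r by (simp add: field_simps)
  finally have tie_break: "\<eta> * real k / (4 * real d) \<le> 1 / (20 * r)" .
  have "\<eta> / (8 * real d) \<le> 1 / (40 * r)"
    using bounds(2) r d1 \<eta> by (simp add: field_simps)
  moreover have "hard_piece \<eta> d e x k = 1 / r - \<eta> * real (s div d) - \<eta> * real k / (4 * real d)"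
    using x k unfolding hard_piece_def is_round_robin_point_def round_robin_count_def k_def r_def by simp
  moreover have "1 / (5 * r) + 1 / (20 * r) + 1 / (40 * r) \<le> 1 / r"
    using r by (simp add: field_simps)
  ultimately show ?thesis
    using visits tie_break unfolding k_def by linarith
qed

lemma subgrads_at_round_robin_point:
  assumes T: "1 \<le> T" and \<eta>: "0 < \<eta>" "\<eta> \<le> 1 / (5 * sqrt (real T))"
    and d: "real d = max (25 * \<eta>^2 * (real T)^2) 1"
    and "s \<le> T" and x: "is_round_robin_point \<eta> d e s x"
  shows "subgrad (hardf \<eta> d e) x \<subseteq> {- axis (e (s mod d + 1)) 1}"
    and "subgrad (smoothed (\<eta> / (16 * real d)) (hardf \<eta> d e)) x \<subseteq> {- axis (e (s mod d + 1)) 1}"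
proof -
  define r where "r = \<eta> / (8 * real d)"
  have d1: "1 \<le> d" using d by simp
  have r: "0 < r" "2 * r = \<eta> / (4 * real d)"
    using \<eta> d1 unfolding r_def by auto
  have affine: "hardf \<eta> d e y = (1 / sqrt (real d) - \<eta> * real (s mod d + 1) / (4 * real d))
      + inner (- axis (e (s mod d + 1)) 1) y" if "dist y x < r" for y
  proof (rule hardf_locally_affine[OF _ _ _ that])
    show "s mod d + 1 \<in> {1..d}" using d1 by (simp add: Suc_le_eq)
    show "hard_piece \<eta> d e x i + 2 * r \<le> hard_piece \<eta> d e x (s mod d + 1)"
      if "i \<in> {1..d}" "i \<noteq> s mod d + 1" for i
      unfolding r(2) using round_robin_margin[OF d1 \<eta>(1) x that] .
    show "r \<le> hard_piece \<eta> d e x (s mod d + 1)"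
      unfolding r_def using round_robin_active_piece_lower_bound[OF T \<eta> d \<open>s \<le> T\<close> x] .
  qed
  show "subgrad (hardf \<eta> d e) x \<subseteq> {- axis (e (s mod d + 1)) 1}"
    using subgrad_subset_if_locally_affine[OF r(1) affine] .
  obtain c where "\<And>y. dist y x < r - \<eta> / (16 * real d) \<Longrightarrow>
      smoothed (\<eta> / (16 * real d)) (hardf \<eta> d e) y = c + inner (- axis (e (s mod d + 1)) 1) y"
    using smoothed_locally_affine[of "hardf \<eta> d e" "\<eta> / (16 * real d)" x r,
        OF hardf_borel_measurable _ affine] \<eta>(1) by auto
  moreover have "0 < r - \<eta> / (16 * real d)" using \<eta>(1) d1 unfolding r_def by simp
  ultimately show "subgrad (smoothed (\<eta> / (16 * real d)) (hardf \<eta> d e)) x \<subseteq> {- axis (e (s mod d + 1)) 1}"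
    using subgrad_subset_if_locally_affine by blast
qed

lemma gd_iterates_round_robin:
  assumes "1 \<le> d" "inj_on e {1..d}" "w 1 = 0"
    and gd: "\<And>t. 1 \<le> t \<Longrightarrow> t < T \<Longrightarrow> g t \<in> subgrad F (w t) \<and> w (Suc t) = w t - \<eta> *\<^sub>R g t"
    and subgrad_F: "\<And>s x. s < T \<Longrightarrow> is_round_robin_point \<eta> d e s x \<Longrightarrow>
      subgrad F x \<subseteq> {- axis (e (s mod d + 1)) 1}"
  shows "s < T \<Longrightarrow> is_round_robin_point \<eta> d e s (w (Suc s))"
proof (induction s)
  case 0
  then show ?case using \<open>w 1 = 0\<close> is_round_robin_point_0 by simp
next
  case (Suc s)
  then have IH: "is_round_robin_point \<eta> d e s (w (Suc s))" by simp
  have "g (Suc s) = - axis (e (s mod d + 1)) 1" "w (Suc (Suc s)) = w (Suc s) - \<eta> *\<^sub>R g (Suc s)"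
    using gd[of "Suc s"] subgrad_F[of s, OF _ IH] Suc.prems by auto
  then show ?case using is_round_robin_point_Suc[OF assms(1,2) IH] by simp
qed

theorem mainTheorem14:
  fixes T d :: nat and \<eta> :: real and e :: "nat \<Rightarrow> 'n::finite"
    and w wt :: "nat \<Rightarrow> real^'n" and g gt :: "nat \<Rightarrow> real^'n"
  assumes "T \<ge> 1"
    and "0 < \<eta>" and "\<eta> \<le> 1 / (5 * sqrt (real T))"
    and "real d = max (25 * \<eta>^2 * (real T)^2) 1"
    and "CARD('n) = d"
    and "bij_betw e {1..d} (UNIV :: 'n set)"
    and "w 1 = 0" and "wt 1 = 0"
    and "\<And>t. 1 \<le> t \<Longrightarrow> t < T \<Longrightarrow>
           g t \<in> subgrad (hardf \<eta> d e) (w t) \<and> w (Suc t) = w t - \<eta> *\<^sub>R g t"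
    and "\<And>t. 1 \<le> t \<Longrightarrow> t < T \<Longrightarrow>
           gt t \<in> subgrad (smoothed (\<eta> / (16 * real d)) (hardf \<eta> d e)) (wt t)
           \<and> wt (Suc t) = wt t - \<eta> *\<^sub>R gt t"
  shows "\<forall>t \<in> {1..T}. w t = wt t"
proof
  have d: "1 \<le> d" using assms(4) by simp
  have e: "inj_on e {1..d}" "e ` {1..d} = UNIV" using assms(6) unfolding bij_betw_def by auto
  note subgrads = subgrads_at_round_robin_point[OF assms(1-4) less_imp_le]
  fix t assume "t \<in> {1..T}"
  then have t: "t - 1 < T" "Suc (t - 1) = t" by auto
  have "is_round_robin_point \<eta> d e (t - 1) (w t)"
    using gd_iterates_round_robin[OF d e(1) assms(7,9) subgrads(1) t(1)] t(2) by simp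
  moreover have "is_round_robin_point \<eta> d e (t - 1) (wt t)"
    using gd_iterates_round_robin[OF d e(1) assms(8,10) subgrads(2) t(1)] t(2) by simp
  ultimately show "w t = wt t" using is_round_robin_point_unique[OF e(2)] by blast
qed

end
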